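(* Let ${\tt G}$ be a digraph with a fixed total order on its vertices, $R$ a commutative unital ring, $A$ a unital associative $R$-algebra and $M$ an $(A,A)$-bimodule. Setting $\mathcal F_{A,M}({\tt H}\preceq{\tt H}')$ to be the composite of the covering maps along any chain ${\tt H}={\tt H}_0\prec{\tt H}_1\prec\dots\prec{\tt H}_m={\tt H}'$ (and the identity when ${\tt H}={\tt H}'$) is well defined, and $\mathcal F_{A,M}\colon\mathbf P({\tt G})\to R\text{-}\mathbf{Mod}$ is a covariant functor.
   Context: A digraph ${\tt G}=(V,E)$ has finite $V$ and $E\subseteq(V\times V)\setminus\{(v,v)\}$; $s(e),t(e)$ are source and target of $e$. A multipath is a spanning subgraph (all vertices, subset of edges) each of whose components (of the underlying undirected graph) is an isolated vertex or a simple directed path. $P({\tt G})$ is the set of multipaths ordered by inclusion of edge sets, ${\tt H}\prec{\tt H}\cup e$ the covering relation (add one edge), and $\mathbf P({\tt G})$ the category with a unique morphism ${\tt H}\to{\tt H}'$ iff ${\tt H}\le{\tt H}'$. For a multipath ${\tt H}$ with components $c_0<\dots<c_k$ ordered by minimal vertex, $\mathcal F_{A,M}({\tt H})=M\otimes_R A\otimes_R\cdots\otimes_R A$ (factor $M$ for $c_0$, factor $A$ for $c_1,\dots,c_k$). For ${\tt H}\prec{\tt H}\cup e$ let $s,t$ be the indices of the components of ${\tt H}$ containing $s(e),t(e)$ (so $s\neq t$); the components of ${\tt H}\cup e$ are those of ${\tt H}$ with $c_s,c_t$ merged into one component placed at position $\min(s,t)$, the others keeping their order, and the covering map $\mathcal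 F_{A,M}({\tt H}\prec{\tt H}\cup e)$ sends $a_0\otimes\cdots\otimes a_k$ to the tensor obtained by replacing $a_s,a_t$ with the single factor $a_s\cdot a_t$ (algebra product or bimodule action) in position $\min(s,t)$. *)

theory Defs
  imports Main
begin

definition RA_bimodule ::
  "('r::comm_ring_1 \<Rightarrow> 'a::ring_1 \<Rightarrow> 'a) \<Rightarrow> ('r \<Rightarrow> 'm::ab_group_add \<Rightarrow> 'm)
   \<Rightarrow> ('a \<Rightarrow> 'm \<Rightarrow> 'm) \<Rightarrow> ('m \<Rightarrow> 'a \<Rightarrow> 'm) \<Rightarrow> bool" where
  "RA_bimodule sA sM lact ract \<longleftrightarrow>
     \<comment> \<open>A is an R-module\<close>
     (\<forall>r s a. sA (r + s) a = sA r a + sA s a) \<and>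
     (\<forall>r a b. sA r (a + b) = sA r a + sA r b) \<and>
     (\<forall>r s a. sA (r * s) a = sA r (sA s a)) \<and>
     (\<forall>a. sA 1 a = a) \<and>
     \<comment> \<open>A is an R-algebra\<close>
     (\<forall>r a b. sA r (a * b) = sA r a * b) \<and>
     (\<forall>r a b. sA r (a * b) = a * sA r b) \<and>
     \<comment> \<open>M is an R-module\<close>
     (\<forall>r s m. sM (r + s) m = sM r m + sM s m) \<and>
     (\<forall>r m n. sM r (m + n) = sM r m + sM r n) \<and>
     (\<forall>r s m. sM (r * s) m = sM r (sM s m)) \<and>
     (\<forall>m. sM 1 m = m) \<and>
     \<comment> \<open>M is a left A-module\<close>
     (\<forall>a b m. lact (a + b) m = lact a m + lact b m) \<and>
     (\<forall>a m n. lact a (m + n) = lact a m + lact a n) \<and>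
     (\<forall>a b m. lact (a * b) m = lact a (lact b m)) \<and>
     (\<forall>m. lact 1 m = m) \<and>
     \<comment> \<open>M is a right A-module\<close>
     (\<forall>a b m. ract m (a + b) = ract m a + ract m b) \<and>
     (\<forall>a m n. ract (m + n) a = ract m a + ract n a) \<and>
     (\<forall>a b m. ract m (a * b) = ract (ract m a) b) \<and>
     (\<forall>m. ract m 1 = m) \<and>
     \<comment> \<open>bimodule compatibility\<close>
     (\<forall>a b m. ract (lact a m) b = lact a (ract m b)) \<and>
     \<comment> \<open>compatibility of the actions with the R-structure\<close>
     (\<forall>r a m. lact (sA r a) m = sM r (lact a m)) \<and>
     (\<forall>r a m. lact a (sM r m) = sM r (lact a m)) \<and>
     (\<forall>r a m. ract m (sA r a) = sM r (ract m a)) \<and>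
     (\<forall>r a m. ract (sM r m) a = sM r (ract m a))"

text \<open>A digraph is a finite vertex set V (of a linearly ordered type, giving the fixed
  total order on vertices) and E \<subseteq> (V \<times> V) minus the diagonal. A spanning subgraph is
  given by its edge set H \<subseteq> E.\<close>

definition digraph :: "'v set \<Rightarrow> ('v \<times> 'v) set \<Rightarrow> bool" where
  "digraph V E \<longleftrightarrow> finite V \<and> E \<subseteq> V \<times> V \<and> (\<forall>v. (v, v) \<notin> E)"

definition ucomp :: "'v set \<Rightarrow> ('v \<times> 'v) set \<Rightarrow> 'v \<Rightarrow> 'v set" where
  "ucomp V H v = {w \<in> V. (v, w) \<in> (H \<union> H\<inverse>)\<^sup>*}"

definition comps :: "'v set \<Rightarrow> ('v \<times> 'v) set \<Rightarrow> 'v set set" where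
  "comps V H = ucomp V H ` V"

definition is_simple_dipath :: "'v set \<Rightarrow> ('v \<times> 'v) set \<Rightarrow> bool" where
  "is_simple_dipath C H \<longleftrightarrow>
     (\<exists>vs. distinct vs \<and> set vs = C \<and>
        {e \<in> H. fst e \<in> C \<or> snd e \<in> C} = {(vs ! i, vs ! Suc i) | i. Suc i < length vs})"

definition multipath :: "'v set \<Rightarrow> ('v \<times> 'v) set \<Rightarrow> ('v \<times> 'v) set \<Rightarrow> bool" where
  "multipath V E H \<longleftrightarrow> H \<subseteq> E \<and> (\<forall>C \<in> comps V H. is_simple_dipath C H)"

definition covers :: "'v set \<Rightarrow> ('v \<times> 'v) set \<Rightarrow> ('v \<times> 'v) set \<Rightarrow> ('v \<times> 'v) \<Rightarrow> bool" where
  "covers V E H e \<longleftrightarrow> multipath V E H \<and> multipath V E (insert e H) \<and> e \<notin> H"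

definition comp_idx :: "'v::linorder set \<Rightarrow> ('v \<times> 'v) set \<Rightarrow> 'v \<Rightarrow> nat" where
  "comp_idx V H x = card {C \<in> comps V H. Min C < Min (ucomp V H x)}"

text \<open>A pure tensor m \<otimes> a_1 \<otimes> ... \<otimes> a_k of F(H) = M \<otimes> A^{\<otimes> k} is represented by the pair
  (m, [a_1,...,a_k]). Since pure tensors generate the tensor product and all maps involved
  are R-linear, maps out of F(H) are determined by their values on pure tensors.\<close>

definition pure_tensors :: "'v set \<Rightarrow> ('v \<times> 'v) set \<Rightarrow> ('m \<times> 'a list) set" where
  "pure_tensors V H = {(m, as). Suc (length as) = card (comps V H)}"

definition del_nth :: "nat \<Rightarrow> 'x list \<Rightarrow> 'x list" where
  "del_nth i xs = take i xs @ drop (Suc i) xs"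

text \<open>Merging the factors in positions s and t (positions counted with the M factor at
  position 0): the factors are replaced by a_s \<cdot> a_t in position min s t.\<close>
definition merge_factors ::
  "('a::ring_1 \<Rightarrow> 'm \<Rightarrow> 'm) \<Rightarrow> ('m \<Rightarrow> 'a \<Rightarrow> 'm) \<Rightarrow> nat \<Rightarrow> nat \<Rightarrow> 'm \<times> 'a list \<Rightarrow> 'm \<times> 'a list" where
  "merge_factors lact ract s t x =
     (case x of (m, as) \<Rightarrow>
       if s = 0 then (ract m (as ! (t - 1)), del_nth (t - 1) as)
       else if t = 0 then (lact (as ! (s - 1)) m, del_nth (s - 1) as)
       else (m, del_nth (max s t - 1) (as[min s t - 1 := as ! (s - 1) * as ! (t - 1)])))"

definition cover_map ::
  "('a::ring_1 \<Rightarrow> 'm \<Rightarrow> 'm) \<Rightarrow> ('m \<Rightarrow> 'a \<Rightarrow> 'm) \<Rightarrow> 'v::linorder set \<Rightarrow> ('v \<times> 'v) set \<Rightarrow> ('v \<times> 'v)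
    \<Rightarrow> 'm \<times> 'a list \<Rightarrow> 'm \<times> 'a list" where
  "cover_map lact ract V H e = merge_factors lact ract (comp_idx V H (fst e)) (comp_idx V H (snd e))"

definition is_chain ::
  "'v set \<Rightarrow> ('v \<times> 'v) set \<Rightarrow> ('v \<times> 'v) set \<Rightarrow> ('v \<times> 'v) set \<Rightarrow> ('v \<times> 'v) list \<Rightarrow> bool" where
  "is_chain V E H H' es \<longleftrightarrow> multipath V E H \<and>
     (\<forall>i < length es. covers V E (H \<union> set (take i es)) (es ! i)) \<and>
     H \<union> set es = H'"

fun chain_map ::
  "('a::ring_1 \<Rightarrow> 'm \<Rightarrow> 'm) \<Rightarrow> ('m \<Rightarrow> 'a \<Rightarrow> 'm) \<Rightarrow> 'v::linorder set \<Rightarrow> ('v \<times> 'v) set \<Rightarrow> ('v \<times> 'v) list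
    \<Rightarrow> 'm \<times> 'a list \<Rightarrow> 'm \<times> 'a list" where
  "chain_map lact ract V H [] x = x"
| "chain_map lact ract V H (e # es) x = chain_map lact ract V (insert e H) es (cover_map lact ract V H e x)"

definition F_mor ::
  "('a::ring_1 \<Rightarrow> 'm \<Rightarrow> 'm) \<Rightarrow> ('m \<Rightarrow> 'a \<Rightarrow> 'm) \<Rightarrow> 'v::linorder set \<Rightarrow> ('v \<times> 'v) set \<Rightarrow> ('v \<times> 'v) set
    \<Rightarrow> ('v \<times> 'v) set \<Rightarrow> 'm \<times> 'a list \<Rightarrow> 'm \<times> 'a list" where
  "F_mor lact ract V E H H' = chain_map lact ract V H (SOME es. is_chain V E H H' es)"

end

theory Submission
  imports Defs
begin

text \<open>A vertex labelling g of V by elements of A, together with m in M, determines a pure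
  tensor of F(H) for every multipath H: each component contributes the product of the labels
  along its directed path, except the component of the least vertex v0, which contributes
  (labels before v0) m (labels after v0). Adding an edge e concatenates the path ending at the
  source of e with the path starting at its target, so by associativity of A and of the two
  actions the covering map F(H \<prec> H \<union> e) sends the tensor of (g, m) on H to the tensor of
  (g, m) on H \<union> e. Every pure tensor arises in this way (give the first vertex of each path
  its factor and every other vertex the label 1), hence the composite along any chain from H
  to H' sends the tensor of (g, m) on H to that on H', whatever the chain. Chains exist
  because deleting an edge from a multipath leaves a multipath.\<close>

section \<open>Paths as vertex lists\<close>

definition path_edges :: "'v list \<Rightarrow> ('v \<times> 'v) set" where
  "path_edges vs = set (zip vs (tl vs))"

lemma path_edges_conv_nth: "{(vs ! i, vs ! Suc i) | i. Suc i < length vs} = path_edges vs"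
  unfolding path_edges_def set_zip by (cases vs) (auto simp: nth_tl)

lemma path_edges_Nil [simp]: "path_edges [] = {}"
  and path_edges_singleton [simp]: "path_edges [a] = {}"
  and path_edges_Cons_Cons [simp]: "path_edges (a # b # vs) = insert (a, b) (path_edges (b # vs))"
  by (auto simp: path_edges_def)

lemma path_edges_Cons:
  "path_edges (a # vs) = (if vs = [] then {} else insert (a, hd vs) (path_edges vs))"
  by (cases vs) auto

lemma path_edges_append:
  "xs \<noteq> [] \<Longrightarrow> ys \<noteq> [] \<Longrightarrow>
    path_edges (xs @ ys) = path_edges xs \<union> insert (last xs, hd ys) (path_edges ys)"
proof (induction xs)
  case (Cons a xs)
  then show ?case by (cases xs; cases ys) auto
qed simp

lemma path_edges_subset: "path_edges vs \<subseteq> set vs \<times> set vs"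
  unfolding path_edges_def by (cases vs) (auto dest: set_zip_leftD set_zip_rightD)

lemma snd_path_edges: "snd ` path_edges vs = set (tl vs)"
proof -
  have "map snd (zip (a # ws) ws) = ws" for a :: 'a and ws
    by (induction ws arbitrary: a) auto
  then have "map snd (zip vs (tl vs)) = tl vs" by (cases vs) auto
  then show ?thesis unfolding path_edges_def by (metis set_map)
qed

text \<open>The first vertex is the only one that is not the target of an edge.\<close>
lemma path_edges_inject:
  "distinct vs \<Longrightarrow> distinct ws \<Longrightarrow> set vs = set ws \<Longrightarrow> path_edges vs = path_edges ws \<Longrightarrow> vs = ws"
proof (induction vs arbitrary: ws)
  case (Cons a vs)
  obtain b ws' where ws: "ws = b # ws'" using Cons.prems by (cases ws) auto
  have tails: "set vs = set ws'"
    using Cons.prems(4) snd_path_edges ws by (metis list.sel(3))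
  have "a = b"
  proof (rule ccontr)
    assume "a \<noteq> b"
    then have "b \<in> set vs" using Cons.prems(3) ws by auto
    then show False using tails Cons.prems(2) ws by auto
  qed
  have "path_edges vs = path_edges (a # vs) - {p. fst p = a}"
    using Cons.prems(1) path_edges_subset[of vs] by (auto simp: path_edges_Cons)
  moreover have "path_edges ws' = path_edges (b # ws') - {p. fst p = b}"
    using Cons.prems(2) ws path_edges_subset[of ws'] by (auto simp: path_edges_Cons)
  ultimately have "vs = ws'"
    using Cons.prems ws tails \<open>a = b\<close> by (intro Cons.IH) auto
  then show ?case using ws \<open>a = b\<close> by simp
qed simp

lemma del_nth_cong:
  assumes "length xs = length ys" and "\<And>j. j < length xs \<Longrightarrow> j \<noteq> i \<Longrightarrow> xs ! j = ys ! j"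
  shows "del_nth i xs = del_nth i ys"
proof -
  have "take i xs = take i ys" by (rule nth_equalityI) (use assms in auto)
  moreover have "drop (Suc i) xs = drop (Suc i) ys" by (rule nth_equalityI) (use assms in auto)
  ultimately show ?thesis unfolding del_nth_def by simp
qed

lemma del_nth_map: "del_nth i (map f xs) = map f (del_nth i xs)"
  unfolding del_nth_def by (simp add: take_map drop_map)

lemma del_nth_list_update_same: "del_nth i (xs[i := x]) = del_nth i xs"
  unfolding del_nth_def by simp

lemma remove1_nth_eq_del_nth: "distinct xs \<Longrightarrow> i < length xs \<Longrightarrow> remove1 (xs ! i) xs = del_nth i xs"
proof (induction xs arbitrary: i)
  case (Cons a xs)
  then show ?case by (cases i) (auto simp: del_nth_def)
qed simp

section \<open>Ranks in finite linear orders\<close>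

definition rank :: "'a::linorder set \<Rightarrow> 'a \<Rightarrow> nat" where
  "rank S x = card {y \<in> S. y < x}"

lemma rank_sorted_list_of_set_nth:
  assumes "finite S" and "j < card S"
  shows "rank S (sorted_list_of_set S ! j) = j"
proof -
  let ?L = "sorted_list_of_set S"
  have strict: "sorted_wrt (<) ?L" by (rule strict_sorted_list_of_set)
  have "{y \<in> S. y < ?L ! j} = (\<lambda>k. ?L ! k) ` {..<j}"
  proof (intro equalityI subsetI)
    fix y assume y: "y \<in> {y \<in> S. y < ?L ! j}"
    then obtain k where k: "k < card S" "y = ?L ! k"
      using assms(1) by (metis in_set_conv_nth length_sorted_list_of_set mem_Collect_eq
          set_sorted_list_of_set)
    then have "k < j"
      using y assms sorted_wrt_nth_less[OF strict, of j k] by (cases "j < k") (auto simp: not_less_iff_gr_or_eq)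
    then show "y \<in> (\<lambda>k. ?L ! k) ` {..<j}" using k by auto
  next
    fix y assume "y \<in> (\<lambda>k. ?L ! k) ` {..<j}"
    then obtain k where "k < j" "y = ?L ! k" by auto
    moreover have "?L ! k \<in> set ?L" using \<open>k < j\<close> assms(2) by simp
    ultimately show "y \<in> {y \<in> S. y < ?L ! j}"
      using assms sorted_wrt_nth_less[OF strict, of k j] by auto
  qed
  moreover have "inj_on (\<lambda>k. ?L ! k) {..<j}"
    using assms by (intro inj_onI) (auto simp: nth_eq_iff_index_eq)
  ultimately show ?thesis unfolding rank_def by (simp add: card_image)
qed

lemma sorted_list_of_set_nth_rank:
  assumes "finite S" and "x \<in> S"
  shows "sorted_list_of_set S ! rank S x = x" and "rank S x < card S"
proof -
  obtain j where "j < card S" "sorted_list_of_set S ! j = x"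
    using assms by (metis in_set_conv_nth length_sorted_list_of_set set_sorted_list_of_set)
  then show "sorted_list_of_set S ! rank S x = x" "rank S x < card S"
    using rank_sorted_list_of_set_nth[OF assms(1)] by auto
qed

lemma rank_strict_mono:
  assumes "finite S" and "x \<in> S" and "y \<in> S" and "x < y"
  shows "rank S x < rank S y"
proof -
  have "{z \<in> S. z < x} \<subset> {z \<in> S. z < y}" using assms by (auto intro: less_trans)
  then show ?thesis unfolding rank_def using assms(1) by (simp add: psubset_card_mono)
qed

lemma rank_max: "finite S \<Longrightarrow> x \<in> S \<Longrightarrow> y \<in> S \<Longrightarrow> rank S (max x y) = max (rank S x) (rank S y)"
  and rank_min: "finite S \<Longrightarrow> x \<in> S \<Longrightarrow> y \<in> S \<Longrightarrow> rank S (min x y) = min (rank S x) (rank S y)"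
  using rank_strict_mono[of S x y] rank_strict_mono[of S y x]
  by (cases x y rule: linorder_cases; simp add: max_def min_def)+

lemma rank_eq_0_iff:
  assumes "finite S" and "x \<in> S"
  shows "rank S x = 0 \<longleftrightarrow> x = Min S"
proof -
  have "rank S x = 0 \<longleftrightarrow> (\<forall>y \<in> S. x \<le> y)"
    unfolding rank_def using assms(1) by (auto simp: not_less)
  also have "\<dots> \<longleftrightarrow> x = Min S"
    using assms by (metis Min_eqI Min_le)
  finally show ?thesis .
qed

lemma sorted_list_of_set_remove_eq_del_nth:
  assumes "finite S" and "x \<in> S"
  shows "sorted_list_of_set (S - {x}) = del_nth (rank S x) (sorted_list_of_set S)"
proof -
  have "sorted_list_of_set (S - {x}) = remove1 (sorted_list_of_set S ! rank S x) (sorted_list_of_set S)"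
    using assms by (simp add: sorted_list_of_set_remove sorted_list_of_set_nth_rank)
  also have "\<dots> = del_nth (rank S x) (sorted_list_of_set S)"
    using sorted_list_of_set_nth_rank[OF assms] by (intro remove1_nth_eq_del_nth) auto
  finally show ?thesis .
qed

lemma tl_sorted_list_of_set: "finite S \<Longrightarrow> tl (sorted_list_of_set S) = sorted_list_of_set (S - {Min S})"
  by (cases "S = {}") (simp_all add: sorted_list_of_set_nonempty)

lemma tl_sorted_list_of_set_remove:
  assumes "finite S" and "k \<noteq> Min S"
  shows "tl (sorted_list_of_set (S - {k})) = sorted_list_of_set (S - {Min S} - {k})"
proof (cases "S = {}")
  case False
  then have "Min (S - {k}) = Min S"
    using assms by (intro Min_eqI) auto
  then show ?thesis using assms(1) by (simp add: tl_sorted_list_of_set Diff_insert2[symmetric] insert_commute)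
qed simp

lemma rank_Diff_Min:
  assumes "finite S" and "k \<in> S" and "k \<noteq> Min S"
  shows "rank (S - {Min S}) k = rank S k - 1"
proof -
  have "Min S \<in> S" using assms(1,2) by (metis Min_in empty_iff)
  moreover have "Min S < k" using assms by (simp add: order.not_eq_order_implies_strict)
  ultimately have "Min S \<in> {y \<in> S. y < k}" by simp
  moreover have "{y \<in> S - {Min S}. y < k} = {y \<in> S. y < k} - {Min S}" by blast
  ultimately show ?thesis unfolding rank_def using assms(1) by simp
qed

lemma map_sorted_list_of_set_remove:
  assumes T: "finite T" "k \<in> T" "k' \<in> T"
    and other: "\<And>\<mu>. \<mu> \<in> T \<Longrightarrow> \<mu> \<noteq> k \<Longrightarrow> \<mu> \<noteq> k' \<Longrightarrow> f' \<mu> = f \<mu>"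
  shows "map f' (sorted_list_of_set (T - {k}))
    = del_nth (rank T k) ((map f (sorted_list_of_set T))[rank T k' := f' k'])"
proof -
  let ?L = "sorted_list_of_set T"
  have "map f' (sorted_list_of_set (T - {k})) = del_nth (rank T k) (map f' ?L)"
    using sorted_list_of_set_remove_eq_del_nth[OF T(1,2)] by (simp add: del_nth_map)
  also have "\<dots> = del_nth (rank T k) ((map f ?L)[rank T k' := f' k'])"
  proof (rule del_nth_cong)
    fix j assume j: "j < length (map f' ?L)" "j \<noteq> rank T k"
    then have "?L ! j \<in> T" "rank T (?L ! j) = j"
      using T(1) nth_mem[of j ?L] rank_sorted_list_of_set_nth[OF T(1)] by auto
    have "?L ! rank T k' = k'" using sorted_list_of_set_nth_rank[OF T(1,3)] by simp
    show "map f' ?L ! j = (map f ?L)[rank T k' := f' k'] ! j"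
    proof (cases "j = rank T k'")
      case False
      then have "?L ! j \<noteq> k" "?L ! j \<noteq> k'" using j(2) \<open>rank T (?L ! j) = j\<close> by auto
      then show ?thesis using other \<open>?L ! j \<in> T\<close> j False by simp
    qed (use j \<open>?L ! rank T k' = k'\<close> in simp)
  qed simp
  finally show ?thesis .
qed

lemma map_tl_sorted_list_of_set_remove:
  assumes "finite S" and "k \<in> S" and "k' \<in> S" and "k \<noteq> Min S" and "k' \<noteq> Min S"
    and "\<And>\<mu>. \<mu> \<in> S \<Longrightarrow> \<mu> \<noteq> Min S \<Longrightarrow> \<mu> \<noteq> k \<Longrightarrow> \<mu> \<noteq> k' \<Longrightarrow> f' \<mu> = f \<mu>"
  shows "map f' (tl (sorted_list_of_set (S - {k})))
    = del_nth (rank S k - 1) ((map f (tl (sorted_list_of_set S)))[rank S k' - 1 := f' k'])"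
  unfolding tl_sorted_list_of_set_remove[OF assms(1,4)] tl_sorted_list_of_set[OF assms(1)]
    rank_Diff_Min[OF assms(1,2,4), symmetric] rank_Diff_Min[OF assms(1,3,5), symmetric]
  using assms by (intro map_sorted_list_of_set_remove) auto

lemma nth_map_tl_sorted_list_of_set:
  assumes "finite S" and "k \<in> S" and "k \<noteq> Min S"
  shows "map f (tl (sorted_list_of_set S)) ! (rank S k - 1) = f k"
  using sorted_list_of_set_nth_rank[of "S - {Min S}" k] assms
  unfolding tl_sorted_list_of_set[OF assms(1)] rank_Diff_Min[OF assms, symmetric] by simp

section \<open>Undirected components and their paths\<close>

abbreviation ureach :: "('v \<times> 'v) set \<Rightarrow> ('v \<times> 'v) set" where
  "ureach H \<equiv> (H \<union> H\<inverse>)\<^sup>*"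

lemma ureach_sym: "(v, w) \<in> ureach H \<Longrightarrow> (w, v) \<in> ureach H"
  using sym_rtrancl[OF sym_Un_converse[of H]] by (auto dest: symD)

lemma self_in_ucomp: "v \<in> V \<Longrightarrow> v \<in> ucomp V H v"
  unfolding ucomp_def by auto

lemma ucomp_subset: "ucomp V H v \<subseteq> V"
  unfolding ucomp_def by auto

lemma ucomp_eq: "w \<in> ucomp V H v \<Longrightarrow> ucomp V H w = ucomp V H v"
  unfolding ucomp_def by (auto intro: rtrancl_trans ureach_sym)

lemma ucomp_in_comps: "v \<in> V \<Longrightarrow> ucomp V H v \<in> comps V H"
  unfolding comps_def by auto

lemma comps_nonempty: "C \<in> comps V H \<Longrightarrow> C \<noteq> {}"
  unfolding comps_def using self_in_ucomp by (metis empty_iff imageE)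

lemma comps_subset: "C \<in> comps V H \<Longrightarrow> C \<subseteq> V"
  unfolding comps_def using ucomp_subset by (metis imageE)

lemma ucomp_eq_comp: "C \<in> comps V H \<Longrightarrow> x \<in> C \<Longrightarrow> ucomp V H x = C"
  unfolding comps_def using ucomp_eq by (metis imageE)

lemma finite_comps: "finite V \<Longrightarrow> finite (comps V H)"
  unfolding comps_def by simp

lemma Min_comp_in: "finite V \<Longrightarrow> C \<in> comps V H \<Longrightarrow> Min C \<in> C"
  using comps_nonempty comps_subset by (metis Min_in finite_subset)

lemma inj_on_Min_comps: "finite V \<Longrightarrow> inj_on Min (comps V (H :: ('v::linorder \<times> 'v) set))"
  by (rule inj_onI) (metis Min_comp_in ucomp_eq_comp)

lemma ucomp_edge_closed:
  "H \<subseteq> V \<times> V \<Longrightarrow> (a, b) \<in> H \<Longrightarrow> a \<in> ucomp V H v \<or> b \<in> ucomp V H v \<Longrightarrow>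
    a \<in> ucomp V H v \<and> b \<in> ucomp V H v"
  unfolding ucomp_def by (auto intro: rtrancl_into_rtrancl)

lemma ucomp_eqI:
  assumes "S \<subseteq> V" and "v \<in> S" and "\<And>w. w \<in> S \<Longrightarrow> (v, w) \<in> ureach H"
    and "\<And>a b. (a, b) \<in> H \<Longrightarrow> a \<in> S \<or> b \<in> S \<Longrightarrow> a \<in> S \<and> b \<in> S"
  shows "ucomp V H v = S"
proof
  show "S \<subseteq> ucomp V H v" using assms(1,3) unfolding ucomp_def by auto
  have "w \<in> S" if "(v, w) \<in> ureach H" for w
    using that
  proof (induction rule: rtrancl_induct)
    case (step y z)
    then show ?case using assms(4)[of y z] assms(4)[of z y] by auto
  qed (rule assms(2))
  then show "ucomp V H v \<subseteq> S" unfolding ucomp_def by auto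
qed

lemma ureach_along_path: "path_edges vs \<subseteq> H \<Longrightarrow> w \<in> set vs \<Longrightarrow> (hd vs, w) \<in> ureach H"
proof (induction vs)
  case (Cons a vs)
  show ?case
  proof (cases "w = a")
    case False
    then have "vs \<noteq> []" "w \<in> set vs" using Cons.prems by auto
    moreover from this have "(a, hd vs) \<in> H" "path_edges vs \<subseteq> H"
      using Cons.prems(1) by (auto simp: path_edges_Cons)
    ultimately show ?thesis using Cons.IH by (auto intro: converse_rtrancl_into_rtrancl)
  qed simp
qed simp

definition is_path_of :: "('v \<times> 'v) set \<Rightarrow> 'v set \<Rightarrow> 'v list \<Rightarrow> bool" where
  "is_path_of H C vs \<longleftrightarrow>
     distinct vs \<and> set vs = C \<and> {e \<in> H. fst e \<in> C \<or> snd e \<in> C} = path_edges vs"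

definition comp_path :: "('v \<times> 'v) set \<Rightarrow> 'v set \<Rightarrow> 'v list" where
  "comp_path H C = (SOME vs. is_path_of H C vs)"

lemma is_simple_dipath_iff: "is_simple_dipath C H \<longleftrightarrow> (\<exists>vs. is_path_of H C vs)"
  unfolding is_simple_dipath_def is_path_of_def path_edges_conv_nth ..

lemma is_path_of_unique: "is_path_of H C vs \<Longrightarrow> is_path_of H C ws \<Longrightarrow> vs = ws"
  unfolding is_path_of_def using path_edges_inject by metis

lemma comp_path_eqI: "is_path_of H C vs \<Longrightarrow> comp_path H C = vs"
  unfolding comp_path_def using is_path_of_unique by (metis someI)

lemma multipath_comp_path: "multipath V E H \<Longrightarrow> C \<in> comps V H \<Longrightarrow> is_path_of H C (comp_path H C)"
  unfolding multipath_def is_simple_dipath_iff comp_path_def by (metis someI)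

section \<open>Adding an edge to a multipath\<close>

locale edge_cut =
  fixes V :: "'v set" and H :: "('v \<times> 'v) set" and e :: "'v \<times> 'v" and xs ys :: "'v list"
  assumes edges_in_V: "insert e H \<subseteq> V \<times> V"
    and e_notin: "e \<notin> H"
    and joined_path: "is_path_of (insert e H) (ucomp V (insert e H) (fst e)) (xs @ ys)"
    and xs_ne: "xs \<noteq> []" and ys_ne: "ys \<noteq> []"
    and e_eq: "e = (last xs, hd ys)"
begin

abbreviation joined :: "'v set" where
  "joined \<equiv> ucomp V (insert e H) (fst e)"

lemma distinct_xs: "distinct xs" and distinct_ys: "distinct ys"
  and sides_disjoint: "set xs \<inter> set ys = {}"
  and joined_eq: "joined = set xs \<union> set ys"
  using joined_path unfolding is_path_of_def by auto

lemma ends_in_sides: "fst e \<in> set xs" "snd e \<in> set ys"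
  using xs_ne ys_ne e_eq by auto

lemma ends_in_joined: "fst e \<in> joined" "snd e \<in> joined"
  using ends_in_sides unfolding joined_eq by auto

lemma fst_e_in_V: "fst e \<in> V" and snd_e_in_V: "snd e \<in> V"
  using edges_in_V by auto

lemma edges_at_joined: "{e' \<in> insert e H. fst e' \<in> joined \<or> snd e' \<in> joined} = path_edges (xs @ ys)"
  using joined_path unfolding is_path_of_def by (elim conjE)

lemma H_edges_at_joined:
  assumes "(a, b) \<in> H" and "a \<in> joined \<or> b \<in> joined"
  shows "(a, b) \<in> path_edges xs \<union> path_edges ys"
proof -
  have "(a, b) \<in> {e' \<in> insert e H. fst e' \<in> joined \<or> snd e' \<in> joined}"
    using assms by simp
  then have "(a, b) \<in> path_edges (xs @ ys)"
    unfolding edges_at_joined .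
  then show ?thesis
    using assms(1) e_notin path_edges_append[OF xs_ne ys_ne] e_eq by auto
qed

lemma path_edges_sides_subset: "path_edges xs \<subseteq> H" "path_edges ys \<subseteq> H"
proof -
  have "path_edges (xs @ ys) \<subseteq> insert e H"
    unfolding edges_at_joined[symmetric] by blast
  moreover have "e \<notin> path_edges xs" "e \<notin> path_edges ys"
    using ends_in_sides sides_disjoint path_edges_subset by (metis disjoint_iff mem_Sigma_iff prod.collapse subsetD)+
  ultimately show "path_edges xs \<subseteq> H" "path_edges ys \<subseteq> H"
    using path_edges_append[OF xs_ne ys_ne] by auto
qed

lemma H_edges_at_side:
  assumes "(a, b) \<in> H"
  shows "a \<in> set xs \<or> b \<in> set xs \<Longrightarrow> (a, b) \<in> path_edges xs"
    and "a \<in> set ys \<or> b \<in> set ys \<Longrightarrow> (a, b) \<in> path_edges ys"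
  using H_edges_at_joined[OF assms] joined_eq sides_disjoint path_edges_subset[of xs]
    path_edges_subset[of ys] by blast+

lemma is_path_of_sides:
  assumes "zs = xs \<or> zs = ys"
  shows "is_path_of H (set zs) zs"
proof -
  have "{e' \<in> H. fst e' \<in> set zs \<or> snd e' \<in> set zs} = path_edges zs"
  proof (intro equalityI subsetI)
    fix p assume "p \<in> {e' \<in> H. fst e' \<in> set zs \<or> snd e' \<in> set zs}"
    then show "p \<in> path_edges zs" using H_edges_at_side assms by (cases p) auto
  next
    fix p assume "p \<in> path_edges zs"
    moreover have "path_edges zs \<subseteq> H" using path_edges_sides_subset assms by blast
    ultimately show "p \<in> {e' \<in> H. fst e' \<in> set zs \<or> snd e' \<in> set zs}"
      using path_edges_subset[of zs] by (cases p) auto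
  qed
  then show ?thesis using assms distinct_xs distinct_ys unfolding is_path_of_def by blast
qed

lemma sides_subset_V: "set xs \<union> set ys \<subseteq> V"
  using ucomp_subset[of V "insert e H" "fst e"] unfolding joined_eq .

lemma ucomp_xs: "v \<in> set xs \<Longrightarrow> ucomp V H v = set xs"
  and ucomp_ys: "v \<in> set ys \<Longrightarrow> ucomp V H v = set ys"
proof -
  have "ucomp V H (hd zs) = set zs" if "zs = xs \<or> zs = ys" for zs
  proof (rule ucomp_eqI)
    show "set zs \<subseteq> V" using that sides_subset_V by blast
    show "hd zs \<in> set zs" using that xs_ne ys_ne by auto
    have "path_edges zs \<subseteq> H" using path_edges_sides_subset that by blast
    then show "(hd zs, w) \<in> ureach H" if "w \<in> set zs" for w
      using that by (rule ureach_along_path)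
    show "a \<in> set zs \<and> b \<in> set zs" if "(a, b) \<in> H" "a \<in> set zs \<or> b \<in> set zs" for a b
      using H_edges_at_side[OF that(1)] that(2) \<open>zs = xs \<or> zs = ys\<close> path_edges_subset by blast
  qed
  then show "v \<in> set xs \<Longrightarrow> ucomp V H v = set xs" "v \<in> set ys \<Longrightarrow> ucomp V H v = set ys"
    by (metis ucomp_eq)+
qed

lemma ucomp_disjoint_joined: "v \<in> V - joined \<Longrightarrow> ucomp V (insert e H) v \<inter> joined = {}"
  using ucomp_eq self_in_ucomp by (metis DiffE disjoint_iff)

lemma ucomp_outside:
  assumes v: "v \<in> V - joined"
  shows "ucomp V H v = ucomp V (insert e H) v"
proof (rule ucomp_eqI)
  show "ucomp V (insert e H) v \<subseteq> V" by (rule ucomp_subset)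
  show "v \<in> ucomp V (insert e H) v" using v by (simp add: self_in_ucomp)
  have "(v, w) \<in> ureach H \<and> w \<notin> joined" if "(v, w) \<in> ureach (insert e H)" for w
    using that
  proof (induction rule: rtrancl_induct)
    case (step y z)
    have "z \<notin> joined"
    proof
      assume "z \<in> joined"
      then have "(fst e, z) \<in> ureach (insert e H)" unfolding ucomp_def by blast
      moreover have "(z, v) \<in> ureach (insert e H)"
        using rtrancl_into_rtrancl[OF step(1,2)] by (rule ureach_sym)
      ultimately have "(fst e, v) \<in> ureach (insert e H)" by (rule rtrancl_trans)
      then show False using v unfolding ucomp_def by blast
    qed
    moreover have "(y, z) \<in> H \<union> H\<inverse>"
    proof -
      have "y \<notin> joined" using step.IH by blast
      then have "(y, z) \<noteq> e" "(z, y) \<noteq> e"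
        using \<open>z \<notin> joined\<close> ends_in_joined by (metis fst_conv snd_conv)+
      then show ?thesis using step(2) by blast
    qed
    ultimately show ?case using step.IH by (blast intro: rtrancl_into_rtrancl)
  qed (use v in simp)
  then show "(v, w) \<in> ureach H" if "w \<in> ucomp V (insert e H) v" for w
    using that unfolding ucomp_def by blast
  show "a \<in> ucomp V (insert e H) v \<and> b \<in> ucomp V (insert e H) v"
    if "(a, b) \<in> H" "a \<in> ucomp V (insert e H) v \<or> b \<in> ucomp V (insert e H) v" for a b
    using ucomp_edge_closed[OF edges_in_V] that by blast
qed

lemma is_path_of_outside:
  assumes "v \<in> V - joined"
  shows "is_path_of H (ucomp V (insert e H) v) = is_path_of (insert e H) (ucomp V (insert e H) v)"
proof -
  have "fst e \<notin> ucomp V (insert e H) v" "snd e \<notin> ucomp V (insert e H) v"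
    using ucomp_disjoint_joined[OF assms] ends_in_sides joined_eq by auto
  then show ?thesis unfolding is_path_of_def by auto
qed

lemma comp_path_xs: "v \<in> set xs \<Longrightarrow> comp_path H (ucomp V H v) = xs"
  and comp_path_ys: "v \<in> set ys \<Longrightarrow> comp_path H (ucomp V H v) = ys"
  and comp_path_joined: "v \<in> joined \<Longrightarrow> comp_path (insert e H) (ucomp V (insert e H) v) = xs @ ys"
  using ucomp_xs ucomp_ys is_path_of_sides comp_path_eqI joined_path ucomp_eq by metis+

lemma comp_path_outside:
  "v \<in> V - joined \<Longrightarrow> comp_path H (ucomp V H v) = comp_path (insert e H) (ucomp V (insert e H) v)"
  unfolding comp_path_def using ucomp_outside is_path_of_outside by simp

lemma multipath_remove_edge:
  assumes "multipath V E (insert e H)"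
  shows "multipath V E H"
  unfolding multipath_def
proof (intro conjI ballI)
  show "H \<subseteq> E" using assms unfolding multipath_def by blast
  fix C assume "C \<in> comps V H"
  then obtain v where v: "v \<in> V" "C = ucomp V H v" unfolding comps_def by blast
  show "is_simple_dipath C H"
  proof (cases "v \<in> joined")
    case True
    then have "C = set xs \<or> C = set ys"
      using v ucomp_xs ucomp_ys unfolding joined_eq by blast
    then show ?thesis
      using is_path_of_sides[of xs] is_path_of_sides[of ys] unfolding is_simple_dipath_iff by blast
  next
    case False
    then have "is_path_of H C (comp_path (insert e H) (ucomp V (insert e H) v))"
      using v ucomp_outside is_path_of_outside multipath_comp_path[OF assms] ucomp_in_comps
      by (metis DiffI)
    then show ?thesis unfolding is_simple_dipath_iff by blast
  qed
qed

end

lemma obtain_edge_cut: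
  assumes "E \<subseteq> V \<times> V" and "multipath V E (insert e H)" and "e \<notin> H"
  obtains xs ys where "edge_cut V H e xs ys"
proof -
  let ?H' = "insert e H"
  let ?ws = "comp_path ?H' (ucomp V ?H' (fst e))"
  have "insert e H \<subseteq> V \<times> V" using assms(1,2) unfolding multipath_def by blast
  then have "fst e \<in> ucomp V ?H' (fst e)" "ucomp V ?H' (fst e) \<in> comps V ?H'"
    using self_in_ucomp ucomp_in_comps by fastforce+
  then have path: "is_path_of ?H' (ucomp V ?H' (fst e)) ?ws"
    and "e \<in> path_edges ?ws"
    using multipath_comp_path[OF assms(2)] unfolding is_path_of_def by blast+
  then obtain i where i: "e = (?ws ! i, ?ws ! Suc i)" "Suc i < length ?ws"
    unfolding path_edges_conv_nth[symmetric] by blast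
  have "edge_cut V H e (take (Suc i) ?ws) (drop (Suc i) ?ws)"
  proof
    show "insert e H \<subseteq> V \<times> V" "e \<notin> H" by fact+
    show "is_path_of ?H' (ucomp V ?H' (fst e)) (take (Suc i) ?ws @ drop (Suc i) ?ws)"
      using path by simp
    show "take (Suc i) ?ws \<noteq> []" "drop (Suc i) ?ws \<noteq> []" using i(2) by auto
    show "e = (last (take (Suc i) ?ws), hd (drop (Suc i) ?ws))"
      using i by (simp add: take_Suc_conv_app_nth hd_drop_conv_nth)
  qed
  then show ?thesis by (rule that)
qed

lemma multipath_Diff_singleton:
  assumes "E \<subseteq> V \<times> V" and "multipath V E H"
  shows "multipath V E (H - {e})"
proof (cases "e \<in> H")
  case True
  then have H: "multipath V E (insert e (H - {e}))" using assms(2) by (simp add: insert_absorb)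
  obtain xs ys where "edge_cut V (H - {e}) e xs ys"
    using obtain_edge_cut[OF assms(1) H] by blast
  then show ?thesis using H by (rule edge_cut.multipath_remove_edge)
qed (simp add: assms)

lemma multipath_Diff:
  assumes "E \<subseteq> V \<times> V" and "multipath V E H" and "finite F"
  shows "multipath V E (H - F)"
  using assms(3)
proof (induction F rule: finite_induct)
  case (insert e F)
  then show ?case using multipath_Diff_singleton[OF assms(1)] by (metis Diff_insert)
qed (simp add: assms(2))

lemma multipath_subset:
  assumes "finite V" and "E \<subseteq> V \<times> V" and "multipath V E H'" and "H \<subseteq> H'"
  shows "multipath V E H"
proof -
  have "finite H'"
    using assms unfolding multipath_def by (meson finite_SigmaI finite_subset)
  then have "multipath V E (H' - (H' - H))" using multipath_Diff assms by blast
  moreover have "H' - (H' - H) = H" using assms(4) by auto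
  ultimately show ?thesis by simp
qed

section \<open>Labelled tensors\<close>

lemma prod_list_map_eq_1: "(\<And>x. x \<in> set xs \<Longrightarrow> g x = 1) \<Longrightarrow> (\<Prod>x\<leftarrow>xs. g x) = 1"
  by (induction xs) auto

locale bimodule_action =
  fixes lact :: "'a::monoid_mult \<Rightarrow> 'm \<Rightarrow> 'm" and ract :: "'m \<Rightarrow> 'a \<Rightarrow> 'm"
  assumes lact_mult: "lact (a * b) m = lact a (lact b m)"
    and lact_one: "lact 1 m = m"
    and ract_mult: "ract m (a * b) = ract (ract m a) b"
    and ract_one: "ract m 1 = m"
    and lact_ract_commute: "ract (lact a m) b = lact a (ract m b)"

lemma RA_bimodule_imp_bimodule_action: "RA_bimodule sA sM lact ract \<Longrightarrow> bimodule_action lact ract"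
  unfolding RA_bimodule_def by unfold_locales auto

definition path_act ::
  "('a::monoid_mult \<Rightarrow> 'm \<Rightarrow> 'm) \<Rightarrow> ('m \<Rightarrow> 'a \<Rightarrow> 'm) \<Rightarrow> 'v \<Rightarrow> ('v \<Rightarrow> 'a) \<Rightarrow> 'm \<Rightarrow> 'v list \<Rightarrow> 'm"
  where
  "path_act lact ract v0 g m vs =
     lact (\<Prod>v\<leftarrow>takeWhile (\<lambda>v. v \<noteq> v0) vs. g v) (ract m (\<Prod>v\<leftarrow>tl (dropWhile (\<lambda>v. v \<noteq> v0) vs). g v))"

context bimodule_action
begin

lemma path_act_append_left:
  assumes "v0 \<in> set xs"
  shows "path_act lact ract v0 g m (xs @ ys) = ract (path_act lact ract v0 g m xs) (\<Prod>v\<leftarrow>ys. g v)"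
proof -
  have "dropWhile (\<lambda>v. v \<noteq> v0) xs \<noteq> []" using assms by (simp add: dropWhile_eq_Nil_conv)
  then have "tl (dropWhile (\<lambda>v. v \<noteq> v0) (xs @ ys)) = tl (dropWhile (\<lambda>v. v \<noteq> v0) xs) @ ys"
    using assms by (simp add: dropWhile_append1)
  moreover have "takeWhile (\<lambda>v. v \<noteq> v0) (xs @ ys) = takeWhile (\<lambda>v. v \<noteq> v0) xs"
    using assms by (simp add: takeWhile_append1)
  ultimately show ?thesis unfolding path_act_def by (simp add: ract_mult lact_ract_commute)
qed

lemma path_act_append_right:
  assumes "v0 \<notin> set xs"
  shows "path_act lact ract v0 g m (xs @ ys) = lact (\<Prod>v\<leftarrow>xs. g v) (path_act lact ract v0 g m ys)"
proof -
  have "takeWhile (\<lambda>v. v \<noteq> v0) (xs @ ys) = xs @ takeWhile (\<lambda>v. v \<noteq> v0) ys"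
    and "dropWhile (\<lambda>v. v \<noteq> v0) (xs @ ys) = dropWhile (\<lambda>v. v \<noteq> v0) ys"
    using assms by (auto intro: takeWhile_append2 dropWhile_append2)
  then show ?thesis unfolding path_act_def by (simp add: lact_mult)
qed

lemma path_act_eq_self:
  assumes "\<And>v. v \<in> set vs \<Longrightarrow> g v = 1"
  shows "path_act lact ract v0 g m vs = m"
proof -
  have "set (tl (dropWhile (\<lambda>v. v \<noteq> v0) vs)) \<subseteq> set vs"
    by (metis list.set_sel(2) set_dropWhileD subsetI tl_Nil)
  then have "(\<Prod>v\<leftarrow>tl (dropWhile (\<lambda>v. v \<noteq> v0) vs). g v) = 1"
    using assms by (blast intro: prod_list_map_eq_1)
  moreover have "(\<Prod>v\<leftarrow>takeWhile (\<lambda>v. v \<noteq> v0) vs. g v) = 1"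
    using assms by (blast intro: prod_list_map_eq_1 dest: set_takeWhileD)
  ultimately show ?thesis unfolding path_act_def by (simp add: lact_one ract_one)
qed

end

text \<open>Here the factors are indexed by S in increasing order, the least index carrying m:
  merging the factors of p and q leaves the factors indexed by S - {max p q}.\<close>
lemma merge_factors_sorted:
  fixes f f' :: "'k::linorder \<Rightarrow> 'a::ring_1"
  assumes S: "finite S" "p \<in> S" "q \<in> S" "p \<noteq> q"
    and merged: "p \<noteq> Min S \<Longrightarrow> q \<noteq> Min S \<Longrightarrow> f' (min p q) = f p * f q"
    and other: "\<And>k. k \<in> S \<Longrightarrow> k \<noteq> p \<Longrightarrow> k \<noteq> q \<Longrightarrow> f' k = f k"
    and m'_p: "p = Min S \<Longrightarrow> m' = ract m (f q)"
    and m'_q: "q = Min S \<Longrightarrow> m' = lact (f p) m"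
    and m'_other: "p \<noteq> Min S \<Longrightarrow> q \<noteq> Min S \<Longrightarrow> m' = m"
  shows "merge_factors lact ract (rank S p) (rank S q) (m, map f (tl (sorted_list_of_set S)))
    = (m', map f' (tl (sorted_list_of_set (S - {max p q}))))"
proof -
  let ?fs = "map f (tl (sorted_list_of_set S))"
  have "Min S \<le> p" "Min S \<le> q" using S by simp_all
  have rank0: "rank S k = 0 \<longleftrightarrow> k = Min S" if "k \<in> S" for k
    using rank_eq_0_iff[OF S(1) that] .
  consider (p_min) "p = Min S" | (q_min) "q = Min S" | (neither) "p \<noteq> Min S" "q \<noteq> Min S" by blast
  then show ?thesis
  proof cases
    case p_min
    with \<open>Min S \<le> q\<close> S(4) have "max p q = q" "q \<noteq> Min S" by (auto simp: max_def)
    moreover have "map f' (tl (sorted_list_of_set (S - {q})))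
        = del_nth (rank S q - 1) (?fs[rank S q - 1 := f' q])"
      by (rule map_tl_sorted_list_of_set_remove[OF S(1,3,3) \<open>q \<noteq> Min S\<close> \<open>q \<noteq> Min S\<close>])
        (use other p_min in auto)
    ultimately show ?thesis
      unfolding merge_factors_def using p_min m'_p rank0 S nth_map_tl_sorted_list_of_set[OF S(1,3) \<open>q \<noteq> Min S\<close>, of f]
      by (simp add: del_nth_list_update_same)
  next
    case q_min
    with \<open>Min S \<le> p\<close> S(4) have "max p q = p" "p \<noteq> Min S" by (auto simp: max_def)
    moreover have "map f' (tl (sorted_list_of_set (S - {p})))
        = del_nth (rank S p - 1) (?fs[rank S p - 1 := f' p])"
      by (rule map_tl_sorted_list_of_set_remove[OF S(1,2,2) \<open>p \<noteq> Min S\<close> \<open>p \<noteq> Min S\<close>])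
        (use other q_min in auto)
    ultimately show ?thesis
      unfolding merge_factors_def using q_min m'_q rank0 S nth_map_tl_sorted_list_of_set[OF S(1,2) \<open>p \<noteq> Min S\<close>, of f]
      by (simp add: del_nth_list_update_same)
  next
    case neither
    have "max p q \<in> S" "min p q \<in> S" "max p q \<noteq> Min S" "min p q \<noteq> Min S"
      using S(2,3) neither by (simp_all add: max_def min_def)
    moreover have "{max p q, min p q} = {p, q}" by (auto simp: max_def min_def)
    ultimately have "map f' (tl (sorted_list_of_set (S - {max p q})))
        = del_nth (rank S (max p q) - 1) (?fs[rank S (min p q) - 1 := f' (min p q)])"
      using other by (intro map_tl_sorted_list_of_set_remove[OF S(1)]) auto
    then show ?thesis
      unfolding merge_factors_def rank_max[OF S(1-3)] rank_min[OF S(1-3)]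
      using neither m'_other merged rank0 S nth_map_tl_sorted_list_of_set[OF S(1,2), of f]
        nth_map_tl_sorted_list_of_set[OF S(1,3), of f] by simp
  qed
qed

definition comp_mins :: "'v::linorder set \<Rightarrow> ('v \<times> 'v) set \<Rightarrow> 'v set" where
  "comp_mins V H = Min ` comps V H"

definition comp_prod :: "'v::linorder set \<Rightarrow> ('v \<times> 'v) set \<Rightarrow> ('v \<Rightarrow> 'a::monoid_mult) \<Rightarrow> 'v \<Rightarrow> 'a" where
  "comp_prod V H g v = (\<Prod>w\<leftarrow>comp_path H (ucomp V H v). g w)"

text \<open>The component of Min V carries the factor in M; the other components are listed by
  increasing minimal vertex, as in comp_idx.\<close>
definition labelled_tensor ::
  "('a::monoid_mult \<Rightarrow> 'm \<Rightarrow> 'm) \<Rightarrow> ('m \<Rightarrow> 'a \<Rightarrow> 'm) \<Rightarrow> 'v::linorder set \<Rightarrow> ('v \<times> 'v) set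
    \<Rightarrow> ('v \<Rightarrow> 'a) \<Rightarrow> 'm \<Rightarrow> 'm \<times> 'a list" where
  "labelled_tensor lact ract V H g m =
     (path_act lact ract (Min V) g m (comp_path H (ucomp V H (Min V))),
      map (comp_prod V H g) (tl (sorted_list_of_set (comp_mins V H))))"

lemma finite_comp_mins: "finite V \<Longrightarrow> finite (comp_mins V H)"
  unfolding comp_mins_def by (simp add: finite_comps)

lemma card_comp_mins: "finite V \<Longrightarrow> card (comp_mins V H) = card (comps V H)"
  unfolding comp_mins_def by (rule card_image) (rule inj_on_Min_comps)

lemma Min_ucomp_in_comp_mins: "v \<in> V \<Longrightarrow> Min (ucomp V H v) \<in> comp_mins V H"
  unfolding comp_mins_def using ucomp_in_comps by (rule imageI)

lemma comp_minsD:
  assumes "finite V" and "\<mu> \<in> comp_mins V H"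
  shows "\<mu> \<in> V" and "Min (ucomp V H \<mu>) = \<mu>"
proof -
  obtain C where C: "C \<in> comps V H" "\<mu> = Min C" using assms(2) unfolding comp_mins_def by blast
  then have "\<mu> \<in> C" using Min_comp_in[OF assms(1)] by simp
  then show "\<mu> \<in> V" using comps_subset[OF C(1)] by blast
  show "Min (ucomp V H \<mu>) = \<mu>" using ucomp_eq_comp[OF C(1) \<open>\<mu> \<in> C\<close>] C(2) by simp
qed

lemma comp_idx_eq_rank:
  assumes "finite V"
  shows "comp_idx V H v = rank (comp_mins V H) (Min (ucomp V H v))"
proof -
  let ?a = "Min (ucomp V H v)"
  have "Min ` {C \<in> comps V H. Min C < ?a} = {\<mu> \<in> comp_mins V H. \<mu> < ?a}"
    unfolding comp_mins_def by blast
  moreover have "inj_on Min {C \<in> comps V H. Min C < ?a}"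
    using inj_on_Min_comps[OF assms] by (rule inj_on_subset) blast
  ultimately show ?thesis
    unfolding comp_idx_def rank_def by (metis (no_types, lifting) card_image)
qed

lemma Min_comp_eq_Min_iff:
  assumes "finite V" and "C \<in> comps V H"
  shows "Min C = Min V \<longleftrightarrow> Min V \<in> C"
proof -
  have "C \<subseteq> V" "C \<noteq> {}" "finite C"
    using assms comps_subset comps_nonempty finite_subset by metis+
  then show ?thesis using assms(1) by (metis Min_antimono Min_in Min_le antisym)
qed

lemma Min_comp_mins:
  assumes "finite V" and "V \<noteq> {}"
  shows "Min (comp_mins V H) = Min V"
proof (rule Min_eqI)
  show "finite (comp_mins V H)" using assms(1) by (rule finite_comp_mins)
  show "Min V \<le> \<mu>" if "\<mu> \<in> comp_mins V H" for \<mu>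
    using comp_minsD(1)[OF assms(1) that] assms(1) by simp
  have "Min V \<in> V" using assms by simp
  then have "ucomp V H (Min V) \<in> comps V H" "Min V \<in> ucomp V H (Min V)"
    by (rule ucomp_in_comps, rule self_in_ucomp)
  then have "Min (ucomp V H (Min V)) = Min V"
    using Min_comp_eq_Min_iff[OF assms(1)] by blast
  then show "Min V \<in> comp_mins V H"
    using Min_ucomp_in_comp_mins[OF \<open>Min V \<in> V\<close>] by metis
qed

locale finite_edge_cut = edge_cut V H e xs ys
  for V :: "'v::linorder set" and H e xs ys +
  assumes finite_V: "finite V"
begin

abbreviation min_xs :: 'v where "min_xs \<equiv> Min (set xs)"
abbreviation min_ys :: 'v where "min_ys \<equiv> Min (set ys)"

lemma min_xs_in: "min_xs \<in> set xs" and min_ys_in: "min_ys \<in> set ys"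
  using xs_ne ys_ne by simp_all

lemma min_xs_in_comp_mins: "min_xs \<in> comp_mins V H" and min_ys_in_comp_mins: "min_ys \<in> comp_mins V H"
  using Min_ucomp_in_comp_mins fst_e_in_V snd_e_in_V ucomp_xs ucomp_ys ends_in_sides
  by metis+

lemma comp_idx_ends: "comp_idx V H (fst e) = rank (comp_mins V H) min_xs"
  "comp_idx V H (snd e) = rank (comp_mins V H) min_ys"
  unfolding comp_idx_eq_rank[OF finite_V] using ucomp_xs ucomp_ys ends_in_sides by simp_all

lemma comp_mins_not_joined:
  assumes "\<mu> \<in> comp_mins V H" "\<mu> \<noteq> min_xs" "\<mu> \<noteq> min_ys"
  shows "\<mu> \<in> V - joined"
  using comp_minsD[OF finite_V assms(1)] assms(2,3) ucomp_xs ucomp_ys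
  unfolding joined_eq by auto

lemma Min_joined: "Min joined = min min_xs min_ys"
  unfolding joined_eq using xs_ne ys_ne by (simp add: Min_Un)

lemma max_ends_in_joined: "max min_xs min_ys \<in> joined"
  using min_xs_in min_ys_in joined_eq by (simp add: max_def)

lemma comp_mins_insert_edge: "comp_mins V (insert e H) = comp_mins V H - {max min_xs min_ys}"
proof (intro equalityI subsetI)
  fix \<mu> assume "\<mu> \<in> comp_mins V (insert e H)"
  then obtain v where v: "v \<in> V" "\<mu> = Min (ucomp V (insert e H) v)"
    unfolding comp_mins_def comps_def by blast
  show "\<mu> \<in> comp_mins V H - {max min_xs min_ys}"
  proof (cases "v \<in> joined")
    case True
    then have "\<mu> = min min_xs min_ys" using v ucomp_eq Min_joined by metis
    then show ?thesis
      using min_xs_in_comp_mins min_ys_in_comp_mins min_xs_in min_ys_in sides_disjoint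
      by (auto simp: min_def max_def)
  next
    case False
    then have "\<mu> \<in> ucomp V (insert e H) v" "\<mu> \<in> comp_mins V H"
      using v Min_comp_in[OF finite_V ucomp_in_comps] ucomp_outside Min_ucomp_in_comp_mins
      by (metis DiffI)+
    then show ?thesis
      using ucomp_disjoint_joined[of v] v False max_ends_in_joined by blast
  qed
next
  fix \<mu> assume \<mu>: "\<mu> \<in> comp_mins V H - {max min_xs min_ys}"
  show "\<mu> \<in> comp_mins V (insert e H)"
  proof (cases "\<mu> = min_xs \<or> \<mu> = min_ys")
    case True
    have min_of: "c = min a b" if "c = a \<or> c = b" "c \<noteq> max a b" for a b c :: 'v
      using that by (auto simp: min_def max_def)
    have "\<mu> \<noteq> max min_xs min_ys" using \<mu> by blast
    then have "\<mu> = Min joined" using min_of[OF True] Min_joined by simp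
    then show ?thesis using Min_ucomp_in_comp_mins[OF fst_e_in_V] by simp
  next
    case False
    then show ?thesis
      using \<mu> comp_mins_not_joined comp_minsD[OF finite_V] ucomp_outside Min_ucomp_in_comp_mins
      by (metis DiffD1 DiffD2)
  qed
qed

lemma sides_in_comps: "set xs \<in> comps V H" "set ys \<in> comps V H"
  using ucomp_in_comps[OF fst_e_in_V] ucomp_in_comps[OF snd_e_in_V] ucomp_xs ucomp_ys ends_in_sides
  by metis+

lemma min_sides_eq_Min_iff: "min_xs = Min V \<longleftrightarrow> Min V \<in> set xs" "min_ys = Min V \<longleftrightarrow> Min V \<in> set ys"
  using Min_comp_eq_Min_iff[OF finite_V] sides_in_comps by blast+

lemma min_sides_ne: "min_xs \<noteq> min_ys"
  using min_xs_in min_ys_in sides_disjoint by (metis IntI empty_iff)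

lemma comp_prod_min_sides:
  "comp_prod V H g min_xs = (\<Prod>v\<leftarrow>xs. g v)" "comp_prod V H g min_ys = (\<Prod>v\<leftarrow>ys. g v)"
  unfolding comp_prod_def using comp_path_xs[OF min_xs_in] comp_path_ys[OF min_ys_in] by simp_all

lemma comp_prod_joined:
  "comp_prod V (insert e H) g (min min_xs min_ys) = comp_prod V H g min_xs * comp_prod V H g min_ys"
proof -
  have "min min_xs min_ys \<in> joined" using min_xs_in min_ys_in joined_eq by (simp add: min_def)
  then show ?thesis unfolding comp_prod_min_sides
    unfolding comp_prod_def comp_path_joined[OF \<open>min min_xs min_ys \<in> joined\<close>] by simp
qed

lemma comp_prod_other:
  "\<mu> \<in> comp_mins V H \<Longrightarrow> \<mu> \<noteq> min_xs \<Longrightarrow> \<mu> \<noteq> min_ys \<Longrightarrow>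
    comp_prod V (insert e H) g \<mu> = comp_prod V H g \<mu>"
  unfolding comp_prod_def using comp_mins_not_joined comp_path_outside by simp

lemma cover_map_labelled_tensor:
  assumes "bimodule_action lact ract"
  shows "cover_map lact ract V H e (labelled_tensor lact ract V H g m)
    = labelled_tensor lact ract V (insert e H) g m"
proof -
  interpret bimodule_action lact ract by (rule assms)
  let ?S = "comp_mins V H"
  let ?m = "path_act lact ract (Min V) g m (comp_path H (ucomp V H (Min V)))"
  let ?m' = "path_act lact ract (Min V) g m (comp_path (insert e H) (ucomp V (insert e H) (Min V)))"
  have Min_S: "Min ?S = Min V"
    using Min_comp_mins[OF finite_V] fst_e_in_V by blast
  have "Min V \<in> V" using finite_V fst_e_in_V by (metis Min_in empty_iff)
  have "?m' = ract ?m (comp_prod V H g min_ys)" if "min_xs = Min ?S"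
  proof -
    have "Min V \<in> set xs" using that Min_S min_sides_eq_Min_iff by simp
    then show ?thesis
      unfolding comp_prod_min_sides
      using comp_path_xs comp_path_joined joined_eq path_act_append_left by simp
  qed
  moreover have "?m' = lact (comp_prod V H g min_xs) ?m" if "min_ys = Min ?S"
  proof -
    have "Min V \<in> set ys" "Min V \<notin> set xs"
      using that Min_S min_sides_eq_Min_iff sides_disjoint by auto
    then show ?thesis
      unfolding comp_prod_min_sides
      using comp_path_ys comp_path_joined joined_eq path_act_append_right by simp
  qed
  moreover have "?m' = ?m" if "min_xs \<noteq> Min ?S" "min_ys \<noteq> Min ?S"
  proof -
    have "Min V \<in> V - joined"
      using that Min_S min_sides_eq_Min_iff joined_eq \<open>Min V \<in> V\<close> by auto
    then show ?thesis using comp_path_outside by simp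
  qed
  ultimately have "merge_factors lact ract (rank ?S min_xs) (rank ?S min_ys)
      (?m, map (comp_prod V H g) (tl (sorted_list_of_set ?S)))
    = (?m', map (comp_prod V (insert e H) g) (tl (sorted_list_of_set (?S - {max min_xs min_ys}))))"
    using finite_comp_mins[OF finite_V] min_xs_in_comp_mins min_ys_in_comp_mins min_sides_ne
      comp_prod_joined comp_prod_other
    by (intro merge_factors_sorted) auto
  then show ?thesis
    unfolding cover_map_def labelled_tensor_def comp_idx_ends comp_mins_insert_edge .
qed

end

lemma labelled_tensor_in_pure_tensors:
  assumes "finite V" and "V \<noteq> {}"
  shows "labelled_tensor lact ract V H g m \<in> pure_tensors V H"
proof -
  have "comps V H \<noteq> {}" using assms(2) unfolding comps_def by blast
  then have "card (comps V H) \<noteq> 0" using finite_comps[OF assms(1)] by simp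
  then show ?thesis
    unfolding labelled_tensor_def pure_tensors_def
    using card_comp_mins[OF assms(1)] by simp
qed

definition head_labelling :: "'v::linorder set \<Rightarrow> ('v \<times> 'v) set \<Rightarrow> 'a::monoid_mult list \<Rightarrow> 'v \<Rightarrow> 'a"
  where
  "head_labelling V H as v =
     (if Min V \<notin> ucomp V H v \<and> v = hd (comp_path H (ucomp V H v))
      then as ! (rank (comp_mins V H) (Min (ucomp V H v)) - 1) else 1)"

lemma comp_prod_head_labelling:
  assumes "finite V" and "multipath V E H" and "\<mu> \<in> comp_mins V H" and "\<mu> \<noteq> Min V"
  shows "comp_prod V H (head_labelling V H as) \<mu> = as ! (rank (comp_mins V H) \<mu> - 1)"
proof -
  have "\<mu> \<in> V" and Min_\<mu>: "Min (ucomp V H \<mu>) = \<mu>" using comp_minsD[OF assms(1,3)] by auto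
  then have "Min V \<notin> ucomp V H \<mu>"
    using assms(4) Min_comp_eq_Min_iff[OF assms(1) ucomp_in_comps] by metis
  have path: "is_path_of H (ucomp V H \<mu>) (comp_path H (ucomp V H \<mu>))"
    using multipath_comp_path[OF assms(2) ucomp_in_comps[OF \<open>\<mu> \<in> V\<close>]] .
  then obtain a p where ap: "comp_path H (ucomp V H \<mu>) = a # p" and "a \<notin> set p"
    using self_in_ucomp[OF \<open>\<mu> \<in> V\<close>] unfolding is_path_of_def
    by (metis distinct.simps(2) empty_iff list.exhaust list.set(1))
  have "ucomp V H v = ucomp V H \<mu>" if "v \<in> set (a # p)" for v
  proof (rule ucomp_eq)
    show "v \<in> ucomp V H \<mu>" using path ap that unfolding is_path_of_def by simp
  qed
  then have "head_labelling V H as a = as ! (rank (comp_mins V H) \<mu> - 1)"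
    and "\<And>v. v \<in> set p \<Longrightarrow> head_labelling V H as v = 1"
    using \<open>Min V \<notin> ucomp V H \<mu>\<close> Min_\<mu> \<open>a \<notin> set p\<close> ap
    unfolding head_labelling_def by auto
  then show ?thesis unfolding comp_prod_def ap by (simp add: prod_list_map_eq_1)
qed

lemma path_act_head_labelling:
  assumes "finite V" and "V \<noteq> {}" and "multipath V E H" and "bimodule_action lact ract"
  shows "path_act lact ract (Min V) (head_labelling V H as) m (comp_path H (ucomp V H (Min V))) = m"
proof (rule bimodule_action.path_act_eq_self[OF assms(4)])
  have "Min V \<in> V" using assms(1,2) by simp
  fix v assume "v \<in> set (comp_path H (ucomp V H (Min V)))"
  then have "v \<in> ucomp V H (Min V)"
    using multipath_comp_path[OF assms(3) ucomp_in_comps[OF \<open>Min V \<in> V\<close>]]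
    unfolding is_path_of_def by simp
  then have "ucomp V H v = ucomp V H (Min V)" by (rule ucomp_eq)
  then show "head_labelling V H as v = 1"
    unfolding head_labelling_def using self_in_ucomp[OF \<open>Min V \<in> V\<close>] by simp
qed

lemma labelled_tensor_head_labelling:
  assumes "finite V" and "multipath V E H" and "bimodule_action lact ract"
    and "(m, as) \<in> pure_tensors V H"
  shows "labelled_tensor lact ract V H (head_labelling V H as) m = (m, as)"
proof -
  let ?S = "comp_mins V H"
  let ?L = "sorted_list_of_set ?S"
  have len: "Suc (length as) = card ?S"
    using assms(4) card_comp_mins[OF assms(1)] unfolding pure_tensors_def by simp
  then have "V \<noteq> {}" unfolding comp_mins_def comps_def by auto
  have "map (comp_prod V H (head_labelling V H as)) (tl ?L) = as"
  proof (rule nth_equalityI)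
    fix j assume "j < length (map (comp_prod V H (head_labelling V H as)) (tl ?L))"
    then have j: "Suc j < card ?S" by simp
    then have mem: "?L ! Suc j \<in> ?S" and rk: "rank ?S (?L ! Suc j) = Suc j"
      using rank_sorted_list_of_set_nth finite_comp_mins[OF assms(1)] nth_mem[of "Suc j" ?L] by auto
    then have "?L ! Suc j \<noteq> Min V"
      using Min_comp_mins[OF assms(1) \<open>V \<noteq> {}\<close>] rank_eq_0_iff finite_comp_mins[OF assms(1)]
      by (metis nat.distinct(1))
    then show "map (comp_prod V H (head_labelling V H as)) (tl ?L) ! j = as ! j"
      using comp_prod_head_labelling[OF assms(1,2) mem, of as] rk j by (simp add: nth_tl)
  qed (use len in simp)
  then show ?thesis
    unfolding labelled_tensor_def using path_act_head_labelling[OF assms(1) \<open>V \<noteq> {}\<close> assms(2,3)] by simp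
qed

section \<open>Chains of coverings\<close>

lemma chain_map_append:
  "chain_map lact ract V H (es1 @ es2) x
    = chain_map lact ract V (H \<union> set es1) es2 (chain_map lact ract V H es1 x)"
proof (induction es1 arbitrary: H x)
  case (Cons e es1)
  have "insert e H \<union> set es1 = H \<union> set (e # es1)" by auto
  then show ?case using Cons.IH[of "insert e H"] by simp
qed simp

lemma is_chain_ConsD:
  assumes "is_chain V E H H' (e # es)"
  shows "covers V E H e" and "is_chain V E (insert e H) H' es"
proof -
  have step: "covers V E (H \<union> set (take i (e # es))) ((e # es) ! i)" if "i < length (e # es)" for i
    using assms that unfolding is_chain_def by blast
  show "covers V E H e" using step[of 0] by simp
  then have "multipath V E (insert e H)" unfolding covers_def by blast
  then show "is_chain V E (insert e H) H' es"
    using step[of "Suc _"] assms unfolding is_chain_def by auto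
qed

lemma is_chain_append:
  assumes "is_chain V E H H' es1" and "is_chain V E H' H'' es2"
  shows "is_chain V E H H'' (es1 @ es2)"
proof -
  have "covers V E (H \<union> set (take i (es1 @ es2))) ((es1 @ es2) ! i)"
    if i: "i < length (es1 @ es2)" for i
  proof (cases "i < length es1")
    case True
    then show ?thesis using assms(1) unfolding is_chain_def by (simp add: nth_append)
  next
    case False
    then have "H \<union> set (take i (es1 @ es2)) = H' \<union> set (take (i - length es1) es2)"
      and "(es1 @ es2) ! i = es2 ! (i - length es1)"
      using assms(1) unfolding is_chain_def by (auto simp: nth_append)
    then show ?thesis using assms(2) i False unfolding is_chain_def by simp
  qed
  then show ?thesis using assms unfolding is_chain_def by auto
qed

lemma chain_exists:
  assumes "digraph V E" and "multipath V E H" and "multipath V E H'" and "H \<subseteq> H'"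
  shows "\<exists>es. is_chain V E H H' es"
proof -
  have fin: "finite V" and EV: "E \<subseteq> V \<times> V" using assms(1) unfolding digraph_def by auto
  have "finite (H' - H)"
    using assms(3) fin EV unfolding multipath_def by (meson finite_Diff finite_SigmaI finite_subset)
  then obtain es where es: "set es = H' - H" "distinct es" using finite_distinct_list by blast
  have "covers V E (H \<union> set (take i es)) (es ! i)" if i: "i < length es" for i
  proof -
    have "es ! i \<notin> set (take i es)"
      using es(2) i by (auto simp: in_set_conv_nth nth_eq_iff_index_eq)
    moreover have "H \<union> set (take i es) \<subseteq> H'" "insert (es ! i) (H \<union> set (take i es)) \<subseteq> H'"
      using es assms(4) i set_take_subset[of i es] nth_mem[OF i] by blast+
    ultimately show ?thesis
      unfolding covers_def using es i nth_mem multipath_subset[OF fin EV assms(3)] by blast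
  qed
  then show ?thesis using es assms(2,4) unfolding is_chain_def by auto
qed

lemma cover_map_labelled_tensor_if_covers:
  assumes "digraph V E" and "bimodule_action lact ract" and "covers V E H e"
  shows "cover_map lact ract V H e (labelled_tensor lact ract V H g m)
    = labelled_tensor lact ract V (insert e H) g m"
proof -
  have fin: "finite V" and EV: "E \<subseteq> V \<times> V" using assms(1) unfolding digraph_def by auto
  obtain xs ys where "edge_cut V H e xs ys"
    using obtain_edge_cut[OF EV] assms(3) unfolding covers_def by blast
  then have "finite_edge_cut V H e xs ys" using fin by (intro finite_edge_cut.intro finite_edge_cut_axioms.intro)
  then show ?thesis using assms(2) by (rule finite_edge_cut.cover_map_labelled_tensor)
qed

lemma chain_map_labelled_tensor:
  assumes "digraph V E" and "bimodule_action lact ract"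
  shows "is_chain V E H H' es \<Longrightarrow>
    chain_map lact ract V H es (labelled_tensor lact ract V H g m) = labelled_tensor lact ract V H' g m"
proof (induction es arbitrary: H)
  case Nil
  then show ?case unfolding is_chain_def by simp
next
  case (Cons e es)
  then show ?case
    using cover_map_labelled_tensor_if_covers[OF assms is_chain_ConsD(1)[OF Cons.prems]]
      Cons.IH[OF is_chain_ConsD(2)[OF Cons.prems]] by simp
qed

lemma pure_tensors_nonempty: "x \<in> pure_tensors V H \<Longrightarrow> V \<noteq> {}"
  unfolding pure_tensors_def comps_def by auto

lemma chain_map_pure_tensor:
  assumes "digraph V E" and "bimodule_action lact ract" and "multipath V E H"
    and "x \<in> pure_tensors V H"
  obtains g where "\<And>H' es. is_chain V E H H' es \<Longrightarrow>
    chain_map lact ract V H es x = labelled_tensor lact ract V H' g (fst x)"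
proof -
  obtain m as where x: "x = (m, as)" by fastforce
  have "finite V" using assms(1) unfolding digraph_def by blast
  moreover have "(m, as) \<in> pure_tensors V H" using assms(4) x by simp
  ultimately have "labelled_tensor lact ract V H (head_labelling V H as) m = x"
    using labelled_tensor_head_labelling[OF _ assms(3,2)] x by blast
  then obtain g where "labelled_tensor lact ract V H g m = x" ..
  then have "chain_map lact ract V H es x = labelled_tensor lact ract V H' g (fst x)"
    if "is_chain V E H H' es" for H' es
    using chain_map_labelled_tensor[OF assms(1,2) that, of g m] x by simp
  then show ?thesis by (rule that)
qed

lemma chain_map_in_pure_tensors:
  assumes "digraph V E" and "bimodule_action lact ract" and "is_chain V E H H' es"
    and "x \<in> pure_tensors V H"
  shows "chain_map lact ract V H es x \<in> pure_tensors V H'"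
proof -
  have "multipath V E H" using assms(3) unfolding is_chain_def by blast
  moreover have "finite V" using assms(1) unfolding digraph_def by blast
  ultimately show ?thesis
    using chain_map_pure_tensor[OF assms(1,2) _ assms(4)] assms(3,4)
      labelled_tensor_in_pure_tensors pure_tensors_nonempty by metis
qed

lemma chain_map_chain_independent:
  assumes "digraph V E" and "bimodule_action lact ract"
    and "is_chain V E H H' es1" and "is_chain V E H H' es2" and "x \<in> pure_tensors V H"
  shows "chain_map lact ract V H es1 x = chain_map lact ract V H es2 x"
proof -
  have "multipath V E H" using assms(3) unfolding is_chain_def by blast
  then show ?thesis
    using chain_map_pure_tensor[OF assms(1,2) _ assms(5)] assms(3,4) by metis
qed

lemma F_mor_eq_chain_map:
  assumes "digraph V E" and "bimodule_action lact ract" and "is_chain V E H H' es"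
    and "x \<in> pure_tensors V H"
  shows "F_mor lact ract V E H H' x = chain_map lact ract V H es x"
  unfolding F_mor_def
  using chain_map_chain_independent[OF assms(1,2) someI[of "is_chain V E H H'", OF assms(3)] assms(3,4)] .

lemma F_mor_id:
  assumes "digraph V E" and "bimodule_action lact ract" and "multipath V E H"
    and "x \<in> pure_tensors V H"
  shows "F_mor lact ract V E H H x = x"
proof -
  have "is_chain V E H H []" using assms(3) unfolding is_chain_def by simp
  then show ?thesis using F_mor_eq_chain_map[OF assms(1,2) _ assms(4)] by simp
qed

lemma F_mor_comp:
  assumes "digraph V E" and "bimodule_action lact ract"
    and "multipath V E H" and "multipath V E H'" and "multipath V E H''"
    and "H \<subseteq> H'" and "H' \<subseteq> H''" and "x \<in> pure_tensors V H"
  shows "F_mor lact ract V E H' H'' (F_mor lact ract V E H H' x) = F_mor lact ract V E H H'' x"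
proof -
  obtain es1 es2 where es1: "is_chain V E H H' es1" and es2: "is_chain V E H' H'' es2"
    using chain_exists assms(1,3-7) by metis
  then have "H \<union> set es1 = H'" unfolding is_chain_def by blast
  have "F_mor lact ract V E H' H'' (F_mor lact ract V E H H' x)
      = chain_map lact ract V H' es2 (chain_map lact ract V H es1 x)"
    using F_mor_eq_chain_map[OF assms(1,2)] chain_map_in_pure_tensors[OF assms(1,2)] es1 es2 assms(8)
    by metis
  also have "\<dots> = chain_map lact ract V H (es1 @ es2) x"
    using chain_map_append \<open>H \<union> set es1 = H'\<close> by metis
  also have "\<dots> = F_mor lact ract V E H H'' x"
    using F_mor_eq_chain_map[OF assms(1,2) is_chain_append[OF es1 es2] assms(8)] by simp
  finally show ?thesis .
qed

theorem proposition4p8: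
  fixes V :: "'v::linorder set" and E :: "('v \<times> 'v) set"
    and sA :: "'r::comm_ring_1 \<Rightarrow> 'a::ring_1 \<Rightarrow> 'a" and sM :: "'r \<Rightarrow> 'm::ab_group_add \<Rightarrow> 'm"
    and lact :: "'a \<Rightarrow> 'm \<Rightarrow> 'm" and ract :: "'m \<Rightarrow> 'a \<Rightarrow> 'm"
  assumes "digraph V E"
    and "RA_bimodule sA sM lact ract"
  shows
    \<comment> \<open>every morphism H \<le> H' of P(G) is realized by a chain of coverings\<close>
    "(\<forall>H H'. multipath V E H \<and> multipath V E H' \<and> H \<subseteq> H' \<longrightarrow> (\<exists>es. is_chain V E H H' es))
     \<comment> \<open>the composite maps F(H) into F(H')\<close>
     \<and> (\<forall>H H' es x. is_chain V E H H' es \<and> x \<in> pure_tensors V H \<longrightarrow>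
          chain_map lact ract V H es x \<in> pure_tensors V H')
     \<comment> \<open>well-definedness: independent of the chain\<close>
     \<and> (\<forall>H H' es1 es2 x. is_chain V E H H' es1 \<and> is_chain V E H H' es2 \<and> x \<in> pure_tensors V H \<longrightarrow>
          chain_map lact ract V H es1 x = chain_map lact ract V H es2 x)
     \<comment> \<open>functoriality: identities and composition\<close>
     \<and> (\<forall>H x. multipath V E H \<and> x \<in> pure_tensors V H \<longrightarrow> F_mor lact ract V E H H x = x)
     \<and> (\<forall>H H' H'' x. multipath V E H \<and> multipath V E H' \<and> multipath V E H'' \<and> H \<subseteq> H' \<and> H' \<subseteq> H''
          \<and> x \<in> pure_tensors V H \<longrightarrow>
          F_mor lact ract V E H' H'' (F_mor lact ract V E H H' x) = F_mor lact ract V E H H'' x)"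
proof -
  have bim: "bimodule_action lact ract"
    using assms(2) by (rule RA_bimodule_imp_bimodule_action)
  show ?thesis
  proof (intro conjI allI impI; elim conjE)
    show "\<exists>es. is_chain V E H H' es"
      if "multipath V E H" "multipath V E H'" "H \<subseteq> H'" for H H'
      using chain_exists[OF assms(1) that] .
    show "chain_map lact ract V H es x \<in> pure_tensors V H'"
      if "is_chain V E H H' es" "x \<in> pure_tensors V H" for H H' es x
      using chain_map_in_pure_tensors[OF assms(1) bim that] .
    show "chain_map lact ract V H es1 x = chain_map lact ract V H es2 x"
      if "is_chain V E H H' es1" "is_chain V E H H' es2" "x \<in> pure_tensors V H" for H H' es1 es2 x
      using chain_map_chain_independent[OF assms(1) bim that] .
    show "F_mor lact ract V E H H x = x" if "multipath V E H" "x \<in> pure_tensors V H" for H x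
      using F_mor_id[OF assms(1) bim that] .
    show "F_mor lact ract V E H' H'' (F_mor lact ract V E H H' x) = F_mor lact ract V E H H'' x"
      if "multipath V E H" "multipath V E H'" "multipath V E H''" "H \<subseteq> H'" "H' \<subseteq> H''"
        "x \<in> pure_tensors V H" for H H' H'' x
      using F_mor_comp[OF assms(1) bim that] .
  qed
qed

end
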